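(* Let $\boldsymbol{B} = [\boldsymbol{B}[1]\ \cdots\ \boldsymbol{B}[n]]$ be a block dictionary with pairwise disjoint block subspaces $\mathcal{S}_i=\operatorname{span}(\boldsymbol{B}[i])$ of dimensions $d_i$, and let $k\ge 1$. For each $i$ let $\bar{\boldsymbol{B}}[i]\in\mathbb{R}^{D\times d_i}$ be an arbitrary full column-rank submatrix of $\boldsymbol{B}[i]$, and set $\bar{\boldsymbol{B}} = [\bar{\boldsymbol{B}}[1]\ \cdots\ \bar{\boldsymbol{B}}[n]]$. Then every signal $\boldsymbol{y}\in\mathbb{R}^D$ that admits a $k$-block-sparse representation admits a unique one (i.e. the blocks $\{i_l\}$ and the vectors $\{\boldsymbol{s}_{i_l}\}$ generating a $k$-block-sparse representation are uniquely determined) if and only if $\bar{\boldsymbol{B}}\bar{\boldsymbol{c}}\neq\boldsymbol{0}$ for every nonzero $2k$-block-sparse vector $\bar{\boldsymbol{c}}$.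
   Context: $\boldsymbol{B}\in\mathbb{R}^{D\times N}$ has unit-Euclidean-norm columns and blocks $\boldsymbol{B}[i]\in\mathbb{R}^{D\times m_i}$ (possibly with linearly dependent columns); $\mathcal{S}_i$ is the column span of $\boldsymbol{B}[i]$, $d_i=\dim\mathcal{S}_i$, and $\mathcal{S}_i\cap\mathcal{S}_j=\{0\}$ for $i\ne j$. A vector $\bar{\boldsymbol{c}}=(\bar{\boldsymbol{c}}[1];\dots;\bar{\boldsymbol{c}}[n])$ with $\bar{\boldsymbol{c}}[i]\in\mathbb{R}^{d_i}$ is $2k$-block-sparse if at most $2k$ of its blocks $\bar{\boldsymbol{c}}[i]$ are nonzero. A $k$-block-sparse representation of $\boldsymbol{y}$ is an expression $\boldsymbol{y}=\sum_{i\in\Lambda}\boldsymbol{s}_i$ with $\Lambda\subseteq\{1,\dots,n\}$, $|\Lambda|\le k$, $\boldsymbol{s}_i\in\mathcal{S}_i\setminus\{0\}$; it is unique if any two such expressions have the same $\Lambda$ and the same vectors $\boldsymbol{s}_i$. *)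

theory Defs
  imports "HOL-Analysis.Analysis"
begin

text \<open>A block dictionary with n blocks: block i (i < n) has columns B i j for j < m i,
  vectors in R^D (type real^'d).\<close>

definition block_subspace :: "(nat \<Rightarrow> nat \<Rightarrow> real^'d) \<Rightarrow> (nat \<Rightarrow> nat) \<Rightarrow> nat \<Rightarrow> (real^'d) set" where
  "block_subspace B m i = span {B i j | j. j < m i}"

definition is_kbs_rep :: "(nat \<Rightarrow> nat \<Rightarrow> real^'d) \<Rightarrow> (nat \<Rightarrow> nat) \<Rightarrow> nat \<Rightarrow> nat \<Rightarrow> real^'d
    \<Rightarrow> nat set \<Rightarrow> (nat \<Rightarrow> real^'d) \<Rightarrow> bool" where
  "is_kbs_rep B m n k y Lam s \<longleftrightarrow>
     Lam \<subseteq> {..<n} \<and> card Lam \<le> k \<and>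
     (\<forall>i\<in>Lam. s i \<in> block_subspace B m i \<and> s i \<noteq> 0) \<and>
     y = (\<Sum>i\<in>Lam. s i)"

definition has_kbs_rep where
  "has_kbs_rep B m n k y \<longleftrightarrow> (\<exists>Lam s. is_kbs_rep B m n k y Lam s)"

definition unique_kbs_rep where
  "unique_kbs_rep B m n k y \<longleftrightarrow>
     (\<forall>Lam s Lam' s'. is_kbs_rep B m n k y Lam s \<and> is_kbs_rep B m n k y Lam' s'
        \<longrightarrow> Lam = Lam' \<and> (\<forall>i\<in>Lam. s i = s' i))"

text \<open>J i selects the columns of the submatrix Bbar[i] of B[i]; c i j (j \<in> J i) are the
  entries of block cbar[i].\<close>
definition block_support :: "nat \<Rightarrow> (nat \<Rightarrow> nat set) \<Rightarrow> (nat \<Rightarrow> nat \<Rightarrow> real) \<Rightarrow> nat set" where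
  "block_support n J c = {i. i < n \<and> (\<exists>j\<in>J i. c i j \<noteq> 0)}"

definition reduced_apply :: "(nat \<Rightarrow> nat \<Rightarrow> real^'d) \<Rightarrow> nat \<Rightarrow> (nat \<Rightarrow> nat set) \<Rightarrow> (nat \<Rightarrow> nat \<Rightarrow> real) \<Rightarrow> real^'d" where
  "reduced_apply B n J c = (\<Sum>i<n. \<Sum>j\<in>J i. c i j *\<^sub>R B i j)"

end

theory Submission
  imports Defs
begin

text \<open>Both conditions say that no family of block vectors \<open>t i \<in> S\<^sub>i\<close>, not all zero and
  with at most \<open>2k\<close> nonzero members, sums to zero. Such a vanishing sum splits into two
  different \<open>k\<close>-block-sparse representations of one signal, and conversely two representations
  of one signal differ by such a sum. Since the columns of each reduced block form a basis of
  \<open>S\<^sub>i\<close>, block vectors correspond to coefficient blocks with the same support.\<close>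

lemma independent_family_coeff_eq_0:
  fixes b :: "'i \<Rightarrow> 'a::real_vector"
  assumes "finite J" "inj_on b J" "independent (b ` J)"
    and "(\<Sum>j\<in>J. a j *\<^sub>R b j) = 0" "j \<in> J"
  shows "a j = 0"
proof -
  define u where "u v = a (the_inv_into J b v)" for v
  have "(\<Sum>v\<in>b ` J. u v *\<^sub>R v) = (\<Sum>j\<in>J. a j *\<^sub>R b j)"
    using assms(2) by (simp add: sum.reindex u_def the_inv_into_f_f)
  then have "u (b j) = 0"
    using assms by (intro independentD[OF assms(3)]) auto
  then show ?thesis
    using assms(2,5) by (simp add: u_def the_inv_into_f_f)
qed

lemma in_span_independent_family:
  fixes b :: "'i \<Rightarrow> 'a::euclidean_space"
  assumes "finite J" "inj_on b J" "independent (b ` J)"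
    and "b ` J \<subseteq> V" "card J = dim V" "v \<in> V"
  shows "\<exists>a. v = (\<Sum>j\<in>J. a j *\<^sub>R b j)"
proof -
  have "V \<subseteq> span (b ` J)"
    using card_eq_dim[of "b ` J" V] assms by (simp add: card_image)
  then obtain u where "v = (\<Sum>w\<in>b ` J. u w *\<^sub>R w)"
    using assms(1,6) span_finite[of "b ` J"] by auto
  then have "v = (\<Sum>j\<in>J. u (b j) *\<^sub>R b j)"
    using assms(2) by (simp add: sum.reindex)
  then show ?thesis by (rule exI[of _ "\<lambda>j. u (b j)"])
qed

definition nonzero_blocks :: "nat \<Rightarrow> (nat \<Rightarrow> 'a::zero) \<Rightarrow> nat set" where
  "nonzero_blocks n t = {i. i < n \<and> t i \<noteq> 0}"

lemma sparse_block_null_imp_non_unique_kbs_rep: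
  assumes k: "k \<ge> 1"
    and t_mem: "\<forall>i<n. t i \<in> block_subspace B m i"
    and ne: "nonzero_blocks n t \<noteq> {}" and card_le: "card (nonzero_blocks n t) \<le> 2 * k"
    and null: "(\<Sum>i<n. t i) = 0"
  shows "\<exists>y. has_kbs_rep B m n k y \<and> \<not> unique_kbs_rep B m n k y"
proof -
  define T where "T = nonzero_blocks n t"
  have T_sub: "T \<subseteq> {..<n}" and fin: "finite T"
    unfolding T_def nonzero_blocks_def by auto
  \<comment> \<open>both \<open>L\<close> and \<open>T - L\<close> have at most \<open>k\<close> members because \<open>card T \<le> 2k\<close>\<close>
  obtain L where L: "L \<subseteq> T" "card L = min k (card T)"
    using obtain_subset_with_card_n[of "min k (card T)" T] by auto
  have "card T \<ge> 1"
    using fin ne by (simp add: T_def Suc_le_eq card_gt_0_iff)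
  then have "L \<noteq> {}"
    using L k by auto
  have card_rest: "card (T - L) \<le> k"
    using L card_le fin by (simp add: card_Diff_subset finite_subset T_def)
  have "(\<Sum>i\<in>T. t i) = (\<Sum>i<n. t i)"
    by (rule sum.mono_neutral_left) (auto simp: T_def nonzero_blocks_def)
  with null have "(\<Sum>i\<in>T. t i) = 0" by simp
  moreover have "(\<Sum>i\<in>T. t i) = (\<Sum>i\<in>L. t i) + (\<Sum>i\<in>T - L. t i)"
    using sum.subset_diff[OF L(1) fin] by (simp add: add.commute)
  ultimately have split: "(\<Sum>i\<in>L. t i) = (\<Sum>i\<in>T - L. - t i)"
    by (simp add: sum_negf eq_neg_iff_add_eq_0)
  have nonzero: "\<forall>i\<in>T. t i \<in> block_subspace B m i \<and> t i \<noteq> 0"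
    using t_mem T_sub unfolding T_def nonzero_blocks_def by auto
  define y where "y = (\<Sum>i\<in>L. t i)"
  have rep1: "is_kbs_rep B m n k y L t"
    unfolding is_kbs_rep_def y_def using L T_sub nonzero by auto
  have rep2: "is_kbs_rep B m n k y (T - L) (\<lambda>i. - t i)"
    unfolding is_kbs_rep_def y_def block_subspace_def
    using split card_rest T_sub nonzero by (auto simp: block_subspace_def span_neg)
  have "L \<noteq> T - L"
    using \<open>L \<noteq> {}\<close> by blast
  then show ?thesis
    using rep1 rep2 unfolding has_kbs_rep_def unique_kbs_rep_def by blast
qed

lemma unique_kbs_rep_if_no_sparse_block_null:
  assumes no_null: "\<forall>t. (\<forall>i<n. t i \<in> block_subspace B m i) \<and> card (nonzero_blocks n t) \<le> 2 * k
      \<and> (\<Sum>i<n. t i) = 0 \<longrightarrow> nonzero_blocks n t = {}"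
  shows "unique_kbs_rep B m n k y"
  unfolding unique_kbs_rep_def
proof (intro allI impI)
  fix L s L' s'
  assume "is_kbs_rep B m n k y L s \<and> is_kbs_rep B m n k y L' s'"
  then have L: "L \<subseteq> {..<n}" "card L \<le> k" "\<forall>i\<in>L. s i \<in> block_subspace B m i \<and> s i \<noteq> 0"
      "y = (\<Sum>i\<in>L. s i)"
    and L': "L' \<subseteq> {..<n}" "card L' \<le> k" "\<forall>i\<in>L'. s' i \<in> block_subspace B m i \<and> s' i \<noteq> 0"
      "y = (\<Sum>i\<in>L'. s' i)"
    unfolding is_kbs_rep_def by auto
  define t where "t i = (if i \<in> L then s i else 0) - (if i \<in> L' then s' i else 0)" for i
  have "\<forall>i<n. t i \<in> block_subspace B m i"
    using L(3) L'(3) unfolding t_def block_subspace_def by (auto intro: span_diff span_zero span_neg)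
  moreover have "card (nonzero_blocks n t) \<le> 2 * k"
  proof -
    have "nonzero_blocks n t \<subseteq> L \<union> L'"
      unfolding nonzero_blocks_def t_def by auto
    then have "card (nonzero_blocks n t) \<le> card (L \<union> L')"
      using L(1) L'(1) by (intro card_mono) (auto intro: finite_subset)
    also have "\<dots> \<le> 2 * k"
      using card_Un_le[of L L'] L(2) L'(2) by simp
    finally show ?thesis .
  qed
  moreover have "(\<Sum>i<n. t i) = 0"
    using L(1,4) L'(1,4)
    by (simp add: t_def sum_subtractf sum.If_cases Int_absorb1 Int_absorb2)
  ultimately have t0: "\<And>i. i < n \<Longrightarrow> t i = 0"
    using no_null unfolding nonzero_blocks_def by blast
  have "i \<in> L \<longleftrightarrow> i \<in> L'" for i
  proof
    assume "i \<in> L"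
    show "i \<in> L'"
    proof (rule ccontr)
      assume "i \<notin> L'"
      then show False using t0[of i] \<open>i \<in> L\<close> L(1,3) by (auto simp: t_def)
    qed
  next
    assume "i \<in> L'"
    show "i \<in> L"
    proof (rule ccontr)
      assume "i \<notin> L"
      then show False using t0[of i] \<open>i \<in> L'\<close> L'(1,3) by (auto simp: t_def)
    qed
  qed
  then have "L = L'" by blast
  moreover have "s i = s' i" if "i \<in> L" for i
    using t0[of i] that L(1) \<open>L = L'\<close> by (auto simp: t_def)
  ultimately show "L = L' \<and> (\<forall>i\<in>L. s i = s' i)" by blast
qed

lemma unique_kbs_reps_iff_no_sparse_block_null:
  assumes "k \<ge> 1"
  shows "(\<forall>y. has_kbs_rep B m n k y \<longrightarrow> unique_kbs_rep B m n k y) \<longleftrightarrow>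
    (\<forall>t. (\<forall>i<n. t i \<in> block_subspace B m i) \<and> card (nonzero_blocks n t) \<le> 2 * k
      \<and> (\<Sum>i<n. t i) = 0 \<longrightarrow> nonzero_blocks n t = {})"
proof (intro iffI allI impI)
  fix t
  assume unique: "\<forall>y. has_kbs_rep B m n k y \<longrightarrow> unique_kbs_rep B m n k y"
    and "(\<forall>i<n. t i \<in> block_subspace B m i) \<and> card (nonzero_blocks n t) \<le> 2 * k
      \<and> (\<Sum>i<n. t i) = 0"
  then have t_mem: "\<forall>i<n. t i \<in> block_subspace B m i"
    and card_le: "card (nonzero_blocks n t) \<le> 2 * k" and null: "(\<Sum>i<n. t i) = 0"
    by auto
  show "nonzero_blocks n t = {}"
  proof (rule ccontr)
    assume "nonzero_blocks n t \<noteq> {}"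
    from sparse_block_null_imp_non_unique_kbs_rep[OF assms t_mem this card_le null] unique
    show False by blast
  qed
next
  fix y
  assume "\<forall>t. (\<forall>i<n. t i \<in> block_subspace B m i) \<and> card (nonzero_blocks n t) \<le> 2 * k
      \<and> (\<Sum>i<n. t i) = 0 \<longrightarrow> nonzero_blocks n t = {}"
  then show "unique_kbs_rep B m n k y"
    by (rule unique_kbs_rep_if_no_sparse_block_null)
qed

lemma block_column_in_block_subspace: "j < m i \<Longrightarrow> B i j \<in> block_subspace B m i"
  unfolding block_subspace_def by (auto intro: span_base)

definition block_combination ::
    "(nat \<Rightarrow> nat \<Rightarrow> 'a::real_vector) \<Rightarrow> (nat \<Rightarrow> nat set) \<Rightarrow> (nat \<Rightarrow> nat \<Rightarrow> real) \<Rightarrow> nat \<Rightarrow> 'a" where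
  "block_combination B J c i = (\<Sum>j\<in>J i. c i j *\<^sub>R B i j)"

context
  fixes B :: "nat \<Rightarrow> nat \<Rightarrow> real^'d" and m :: "nat \<Rightarrow> nat" and n :: nat
    and J :: "nat \<Rightarrow> nat set"
  assumes J_sub: "\<forall>i<n. J i \<subseteq> {..<m i}"
    and J_card: "\<forall>i<n. card (J i) = dim (block_subspace B m i)"
    and J_rank: "\<forall>i<n. inj_on (B i) (J i) \<and> independent (B i ` J i)"
begin

lemma finite_J: "i < n \<Longrightarrow> finite (J i)"
  using J_sub finite_subset by blast

lemma block_combination_in_block_subspace:
  assumes "i < n"
  shows "block_combination B J c i \<in> block_subspace B m i"
  using J_sub assms block_column_in_block_subspace[of _ m i B]
  unfolding block_combination_def block_subspace_def
  by (intro span_sum span_scale) auto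

lemma block_combination_eq_0_iff:
  assumes "i < n"
  shows "block_combination B J c i = 0 \<longleftrightarrow> (\<forall>j\<in>J i. c i j = 0)"
proof
  assume "block_combination B J c i = 0"
  then show "\<forall>j\<in>J i. c i j = 0"
    using independent_family_coeff_eq_0[OF finite_J[OF assms]] J_rank assms
    unfolding block_combination_def by blast
qed (simp add: block_combination_def)

lemma nonzero_blocks_block_combination:
  "nonzero_blocks n (block_combination B J c) = block_support n J c"
  unfolding nonzero_blocks_def block_support_def using block_combination_eq_0_iff by auto

lemma block_combination_surj:
  assumes "\<forall>i<n. t i \<in> block_subspace B m i"
  shows "\<exists>c. \<forall>i<n. block_combination B J c i = t i"
proof -
  have "\<exists>a. t i = (\<Sum>j\<in>J i. a j *\<^sub>R B i j)" if "i < n" for i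
    using that assms J_sub J_card J_rank finite_J
    by (intro in_span_independent_family[where V = "block_subspace B m i"])
      (auto intro: block_column_in_block_subspace)
  then obtain c where "\<forall>i<n. t i = (\<Sum>j\<in>J i. c i j *\<^sub>R B i j)"
    by metis
  then show ?thesis
    unfolding block_combination_def by auto
qed

lemma no_sparse_block_null_iff_coeffs:
  "(\<forall>t. (\<forall>i<n. t i \<in> block_subspace B m i) \<and> card (nonzero_blocks n t) \<le> 2 * k
      \<and> (\<Sum>i<n. t i) = 0 \<longrightarrow> nonzero_blocks n t = {}) \<longleftrightarrow>
   (\<forall>c. (\<exists>i<n. \<exists>j\<in>J i. c i j \<noteq> 0) \<and> card (block_support n J c) \<le> 2 * k
      \<longrightarrow> reduced_apply B n J c \<noteq> 0)"
  (is "?null_free \<longleftrightarrow> ?coeff_null_free")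
proof
  assume null_free: ?null_free
  show ?coeff_null_free
  proof (intro allI impI)
    fix c
    assume "(\<exists>i<n. \<exists>j\<in>J i. c i j \<noteq> 0) \<and> card (block_support n J c) \<le> 2 * k"
    then have "nonzero_blocks n (block_combination B J c) \<noteq> {}"
      and "card (nonzero_blocks n (block_combination B J c)) \<le> 2 * k"
      unfolding nonzero_blocks_block_combination block_support_def by auto
    then have "(\<Sum>i<n. block_combination B J c i) \<noteq> 0"
      using null_free block_combination_in_block_subspace by blast
    then show "reduced_apply B n J c \<noteq> 0"
      by (simp add: reduced_apply_def block_combination_def)
  qed
next
  assume coeff_null_free: ?coeff_null_free
  show ?null_free
  proof (intro allI impI)
    fix t
    assume t: "(\<forall>i<n. t i \<in> block_subspace B m i) \<and> card (nonzero_blocks n t) \<le> 2 * k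
      \<and> (\<Sum>i<n. t i) = 0"
    then obtain c where c: "\<forall>i<n. block_combination B J c i = t i"
      using block_combination_surj by blast
    then have "nonzero_blocks n t = block_support n J c"
      unfolding nonzero_blocks_block_combination[symmetric] nonzero_blocks_def by auto
    moreover have "reduced_apply B n J c = 0"
      using t c unfolding reduced_apply_def block_combination_def by simp
    ultimately show "nonzero_blocks n t = {}"
      using coeff_null_free t unfolding block_support_def by auto
  qed
qed

end

theorem proposition2:
  fixes B :: "nat \<Rightarrow> nat \<Rightarrow> real^'d" and m :: "nat \<Rightarrow> nat" and n k :: nat
    and J :: "nat \<Rightarrow> nat set"
  assumes unit_cols: "\<forall>i<n. \<forall>j<m i. norm (B i j) = 1"
    and disjoint: "\<forall>i<n. \<forall>i'<n. i \<noteq> i' \<longrightarrow> block_subspace B m i \<inter> block_subspace B m i' = {0}"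
    and k_pos: "k \<ge> 1"
    and J_sub: "\<forall>i<n. J i \<subseteq> {..<m i}"
    and J_card: "\<forall>i<n. card (J i) = dim (block_subspace B m i)"
    and J_rank: "\<forall>i<n. inj_on (B i) (J i) \<and> independent (B i ` J i)"
  shows "(\<forall>y. has_kbs_rep B m n k y \<longrightarrow> unique_kbs_rep B m n k y) \<longleftrightarrow>
         (\<forall>c. (\<exists>i<n. \<exists>j\<in>J i. c i j \<noteq> 0) \<and> card (block_support n J c) \<le> 2 * k
              \<longrightarrow> reduced_apply B n J c \<noteq> 0)"
  using unique_kbs_reps_iff_no_sparse_block_null[OF k_pos]
    no_sparse_block_null_iff_coeffs[OF J_sub J_card J_rank]
  by (rule trans)

end
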